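(* Let $1\le n\le\omega$. There is a Borel reduction $\psi\colon X_n\to X_n$ of $F_n$ to $F_n$ such that for every $x$ in the image of $\psi$, $x(i)$ is injective for all $i<n$ and $x(i)$ is separated for all $0<i<n$.
   Context: Let $\mathbb N=\{0,1,2,\dots\}$ and identify $2^{\mathbb N}$ with $\mathcal P(\mathbb N)$. For $1\le m\le\omega$ and $x\in((2^{\mathbb N})^{\mathbb N})^m$ define recursively: $A^x_1=\{x(0)(k):k\in\mathbb N\}\subseteq 2^{\mathbb N}$; for $1\le j<m$ and $l\in\mathbb N$, $a^{x,l}_1=\{x(0)(k):x(1)(l)(k)=1\}$ and $a^{x,l}_{j}=\{a^{x,k}_{j-1}:x(j)(l)(k)=1\}$ for $j\ge 2$; and $A^x_{j+1}=\{a^{x,k}_j:k\in\mathbb N\}$ for $1\le j<m$. Let $X_1=(2^{\mathbb N})^{\mathbb N}$, and for $2\le n\le\omega$ let $X_n$ be the set of $x\in((2^{\mathbb N})^{\mathbb N})^n$ such that for every $1\le i<n$: (1) for every $m$ there is $k$ with $x(i)(k)(m)=1$; (2) for every $k$ there is $m$ with $x(i)(k)(m)=1$; (3) for all $k,l_1,l_2$, if $x(i-1)(l_1)=x(i-1)(l_2)$ then $x(i)(k)(l_1)=x(i)(k)(l_2)$. For $1\le n<\omega$, $F_n$ on $X_n$ is $x\mathrel{F_n}y\iff A^x_n=A^y_n$; $F_\omega$ on $X_\omega$ is $x\mathrel{F_\omega}y\iff A^x_j=A^y_j$ for all $1\le j<\omega$. A sequence $a\in(2^{\mathbb N})^{\mathbb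 N}$ is injective if $a(i)\ne a(j)$ for $i\ne j$, and separated if for all distinct $n,k\in\mathbb N$ there is $i$ with $a(i)(n)\ne a(i)(k)$. *)

theory Defs
  imports "HOL-Analysis.Analysis" "HOL-Library.Extended_Nat"
begin

text \<open>
  Conventions.  2^N is nat => bool; (2^N)^N is nat => nat => bool.
  A point x of ((2^N)^N)^n (1 \<le> n \<le> \<omega>, n an extended natural) is represented by
  x :: nat \<Rightarrow> nat \<Rightarrow> nat \<Rightarrow> bool, where x i k m = x(i)(k)(m); coordinates i \<ge> n
  are required to be constantly False (canonical padding), so that ((2^N)^N)^n is
  identified with a closed subset of the Cantor space nat \<Rightarrow> nat \<Rightarrow> nat \<Rightarrow> bool
  (product topology, bool discrete).
\<close>

type_synonym pt = "nat \<Rightarrow> nat \<Rightarrow> nat \<Rightarrow> bool"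

text \<open>
  The sets a^{x,l}_j live in the j-fold iterated power set, so they cannot all be
  given one HOL type.  We define instead the equality of such sets, by
  extensionality.  Put a^{x,l}_0 = x(0)(l) in 2^N.  Then
  a^{x,l}_j = {a^{x,k}_{j-1} : x(j)(l)(k) = 1} for j \<ge> 1, and
  seteq_a j x k y l  holds iff  a^{x,k}_j = a^{y,l}_j.
\<close>

fun seteq_a :: "nat \<Rightarrow> pt \<Rightarrow> nat \<Rightarrow> pt \<Rightarrow> nat \<Rightarrow> bool" where
  "seteq_a 0 x k y l = (x 0 k = y 0 l)"
| "seteq_a (Suc j) x k y l =
     ((\<forall>k'. x (Suc j) k k' \<longrightarrow> (\<exists>l'. y (Suc j) l l' \<and> seteq_a j x k' y l')) \<and>
      (\<forall>l'. y (Suc j) l l' \<longrightarrow> (\<exists>k'. x (Suc j) k k' \<and> seteq_a j x k' y l')))"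

text \<open>A^x_{j+1} = {a^{x,k}_j : k \<in> N}; seteq_A (Suc j) x y holds iff A^x_{j+1} = A^y_{j+1}.\<close>

fun seteq_A :: "nat \<Rightarrow> pt \<Rightarrow> pt \<Rightarrow> bool" where
  "seteq_A 0 x y = True"
| "seteq_A (Suc j) x y =
     ((\<forall>k. \<exists>l. seteq_a j x k y l) \<and> (\<forall>l. \<exists>k. seteq_a j x k y l))"

definition Xsp :: "enat \<Rightarrow> pt set" where
  "Xsp n = {x. (\<forall>i. n \<le> enat i \<longrightarrow> x i = (\<lambda>_ _. False)) \<and>
     (\<forall>i. 1 \<le> i \<and> enat i < n \<longrightarrow>
        (\<forall>m. \<exists>k. x i k m) \<and>
        (\<forall>k. \<exists>m. x i k m) \<and>
        (\<forall>k l1 l2. x (i - 1) l1 = x (i - 1) l2 \<longrightarrow> x i k l1 = x i k l2))}"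

definition Frel :: "enat \<Rightarrow> pt \<Rightarrow> pt \<Rightarrow> bool" where
  "Frel n x y = (case n of enat m \<Rightarrow> seteq_A m x y
                          | \<infinity> \<Rightarrow> (\<forall>j\<ge>1. seteq_A j x y))"

definition injective_seq :: "(nat \<Rightarrow> nat \<Rightarrow> bool) \<Rightarrow> bool" where
  "injective_seq a = (\<forall>i j. i \<noteq> j \<longrightarrow> a i \<noteq> a j)"

definition separated_seq :: "(nat \<Rightarrow> nat \<Rightarrow> bool) \<Rightarrow> bool" where
  "separated_seq a = (\<forall>n k. n \<noteq> k \<longrightarrow> (\<exists>i. a i n \<noteq> a i k))"

definition borel_reduction :: "pt set \<Rightarrow> (pt \<Rightarrow> pt \<Rightarrow> bool) \<Rightarrow> (pt \<Rightarrow> pt \<Rightarrow> bool) \<Rightarrow> (pt \<Rightarrow> pt) \<Rightarrow> bool" where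
  "borel_reduction X E F f =
     (f \<in> measurable (restrict_space borel X) (restrict_space borel X) \<and>
      (\<forall>x\<in>X. \<forall>y\<in>X. E x y \<longleftrightarrow> F (f x) (f y)))"

end

theory Submission
  imports Defs "HOL-Library.Countable_Set_Type"
begin

text \<open>
  The sets a^{x,k}_j are modelled as hereditarily countable sets over the atoms 2^N, so that
  F_n compares, level by level, the sets A^x_{j+1} = range (aset j x). On X_n equality at a
  level propagates downwards, since every level is the union of the members of the next one.

  The reduction is a composition of two maps. The first interleaves every level with shifted
  copies of the sets of x, with infinitely many tags, and with the pairs {u, tag} for all u of
  the previous level. A shifted set is neither a tag nor a pair containing a tag, so the levels
  of x can be read off again; and the new levels are infinite, cover the previous level and
  separate its elements. The second map lists every level without repetitions, in order of
  first occurrence. It leaves the levels unchanged and makes the rows injective and, by the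
  covering and separation properties, separated. Every output bit is a Boolean combination of
  countably many input bits and of the events "the l-th first occurrence is k", so both maps
  are Borel.
\<close>

section \<open>Hereditarily countable sets\<close>

datatype hcs = Atom "nat \<Rightarrow> bool" | HSet "hcs cset"

fun hmembers :: "hcs \<Rightarrow> hcs set" where
  "hmembers (Atom r) = {}"
| "hmembers (HSet B) = rcset B"

definition hset :: "hcs set \<Rightarrow> hcs" where
  "hset A = HSet (acset A)"

lemma hmembers_hset [simp]: "countable A \<Longrightarrow> hmembers (hset A) = A"
  by (simp add: hset_def acset_inverse)

lemma hset_eq_iff: "countable A \<Longrightarrow> countable B \<Longrightarrow> hset A = hset B \<longleftrightarrow> A = B"
  by (metis hmembers_hset)

lemma image_eq_image_iff:
  "f ` A = g ` B \<longleftrightarrow> (\<forall>a\<in>A. \<exists>b\<in>B. f a = g b) \<and> (\<forall>b\<in>B. \<exists>a\<in>A. f a = g b)"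
  by (auto simp: image_iff set_eq_iff) (metis)+

section \<open>The levels of a point\<close>

lemma enat_Suc_less_imp_less: "enat (Suc j) < n \<Longrightarrow> enat j < n"
  by (meson Suc_ile_eq order_less_imp_le)

text \<open>aset j x k is the set a^{x,k}_j, with a^{x,k}_0 = x(0)(k); hence A^x_{j+1} = range (aset j x).\<close>

fun aset :: "nat \<Rightarrow> pt \<Rightarrow> nat \<Rightarrow> hcs" where
  "aset 0 x k = Atom (x 0 k)"
| "aset (Suc j) x k = hset (aset j x ` {k'. x (Suc j) k k'})"

lemma seteq_a_iff_aset_eq: "seteq_a j x k y l \<longleftrightarrow> aset j x k = aset j y l"
proof (induction j arbitrary: k l)
  case (Suc j)
  then show ?case by (simp add: hset_eq_iff image_eq_image_iff)
qed simp

lemma seteq_A_Suc_iff: "seteq_A (Suc j) x y \<longleftrightarrow> range (aset j x) = range (aset j y)"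
  by (simp add: seteq_a_iff_aset_eq[abs_def] image_eq_image_iff)

lemma Frel_enat_Suc_iff: "Frel (enat (Suc m)) x y \<longleftrightarrow> range (aset m x) = range (aset m y)"
  unfolding Frel_def enat.case by (rule seteq_A_Suc_iff)

lemma Frel_infinity_iff: "Frel \<infinity> x y \<longleftrightarrow> (\<forall>j. range (aset j x) = range (aset j y))"
proof -
  have "Frel \<infinity> x y \<longleftrightarrow> (\<forall>j\<ge>1. seteq_A j x y)"
    by (simp add: Frel_def del: seteq_A.simps)
  also have "\<dots> \<longleftrightarrow> (\<forall>j. seteq_A (Suc j) x y)"
    by (metis One_nat_def Suc_le_D Suc_le_mono le0)
  finally show ?thesis by (simp only: seteq_A_Suc_iff)
qed

lemma Xsp_rowD:
  assumes "x \<in> Xsp n" "enat (Suc j) < n"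
  shows Xsp_row_covers: "\<exists>k. x (Suc j) k m"
    and Xsp_row_nonempty: "\<exists>m. x (Suc j) k m"
proof -
  have "1 \<le> Suc j \<and> enat (Suc j) < n" using assms(2) by simp
  then show "\<exists>k. x (Suc j) k m" "\<exists>m. x (Suc j) k m"
    using assms(1) unfolding Xsp_def by blast+
qed

lemma range_aset_eq_Union_hmembers:
  assumes "x \<in> Xsp n" "enat (Suc j) < n"
  shows "range (aset j x) = \<Union> (hmembers ` range (aset (Suc j) x))"
  using Xsp_row_covers[OF assms] by fastforce

lemma Xsp_range_aset_eq_below:
  assumes x: "x \<in> Xsp n" and y: "y \<in> Xsp n" and "enat m < n"
    and "range (aset m x) = range (aset m y)" and "i \<le> m"
  shows "range (aset i x) = range (aset i y)"
  using \<open>i \<le> m\<close>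
proof (induction i rule: inc_induct)
  case base
  show ?case by fact
next
  case (step i)
  then have i: "enat (Suc i) < n"
    using \<open>enat m < n\<close> by (meson Suc_leI enat_ord_simps(1) le_less_trans)
  have "range (aset i x) = \<Union> (hmembers ` range (aset (Suc i) x))"
    by (rule range_aset_eq_Union_hmembers[OF x i])
  also have "\<dots> = \<Union> (hmembers ` range (aset (Suc i) y))"
    by (simp only: step.IH)
  also have "\<dots> = range (aset i y)"
    by (rule range_aset_eq_Union_hmembers[OF y i, symmetric])
  finally show ?case .
qed

lemma Frel_iff_levels:
  assumes "1 \<le> n" "x \<in> Xsp n" "y \<in> Xsp n"
  shows "Frel n x y \<longleftrightarrow> (\<forall>j. enat j < n \<longrightarrow> range (aset j x) = range (aset j y))"
proof (cases n)
  case (enat n')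
  with assms(1) obtain m where m: "n = enat (Suc m)"
    by (cases n') (auto simp: one_enat_def)
  then have "enat m < n" by simp
  from m have "Frel n x y \<longleftrightarrow> range (aset m x) = range (aset m y)"
    by (simp only: Frel_enat_Suc_iff)
  also have "\<dots> \<longleftrightarrow> (\<forall>j\<le>m. range (aset j x) = range (aset j y))"
    using Xsp_range_aset_eq_below[OF assms(2,3) \<open>enat m < n\<close>] by blast
  also have "\<dots> \<longleftrightarrow> (\<forall>j. enat j < n \<longrightarrow> range (aset j x) = range (aset j y))"
    using m by (simp only: enat_ord_simps(2) less_Suc_eq_le)
  finally show ?thesis .
qed (simp add: Frel_infinity_iff)

section \<open>Enrichment\<close>

text \<open>Shifted atoms vanish at 0 and tag atoms do not; this keeps shifted sets apart from tags.\<close>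

primrec hshift :: "hcs \<Rightarrow> hcs" where
  "hshift (Atom r) = Atom (\<lambda>m. case m of 0 \<Rightarrow> False | Suc m' \<Rightarrow> r m')"
| "hshift (HSet B) = HSet (cimage hshift B)"

definition tag_atom :: "nat \<Rightarrow> nat \<Rightarrow> bool" where
  "tag_atom t = (\<lambda>m. case m of 0 \<Rightarrow> True | Suc m' \<Rightarrow> m' = t)"

fun htag :: "nat \<Rightarrow> nat \<Rightarrow> hcs" where
  "htag 0 t = Atom (tag_atom t)"
| "htag (Suc j) t = hset {htag j t}"

lemma hmembers_hshift: "hmembers (hshift a) = hshift ` hmembers a"
  by (cases a) (auto simp: cimage.rep_eq)

lemma inj_hshift: "inj hshift"
proof (rule injI)
  fix a b show "hshift a = hshift b \<Longrightarrow> a = b"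
  proof (induction a arbitrary: b)
    case (Atom r)
    then obtain r' where b: "b = Atom r'" by (cases b) auto
    have "r m = r' m" for m
      using fun_cong[OF Atom.prems[unfolded b, simplified], of "Suc m"] by simp
    then show ?case using b by auto
  next
    case (HSet A)
    then obtain B where b: "b = HSet B" by (cases b) auto
    have "A = B"
    proof (rule cset.inj_map_strong)
      fix z z' assume "z \<in> rcset A" "z' \<in> rcset B" "hshift z = hshift z'"
      show "z = z'" using \<open>z \<in> rcset A\<close> \<open>hshift z = hshift z'\<close> by (rule HSet.IH)
    next
      show "cimage hshift A = cimage hshift B" using HSet.prems b by simp
    qed
    then show ?case using b by simp
  qed
qed

lemma inj_htag: "inj (htag j)"
proof (induction j)
  case 0
  have "tag_atom t = tag_atom t' \<Longrightarrow> t = t'" for t t'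
    unfolding tag_atom_def by (drule fun_cong[of _ _ "Suc t"]) simp
  then show ?case by (auto intro: injI)
next
  case (Suc j)
  then show ?case by (intro injI) (simp add: hset_eq_iff inj_eq)
qed

lemma hshift_neq_htag: "hshift a \<noteq> htag j t"
proof (induction a arbitrary: j)
  case (Atom r)
  then show ?case by (cases j) (auto simp: tag_atom_def fun_eq_iff hset_def intro: exI[of _ 0])
next
  case (HSet A)
  show ?case
  proof (cases j)
    case (Suc i)
    have "htag i t \<noteq> hshift z" if "z \<in> rcset A" for z
      using HSet.IH[OF that, of i] by auto
    then have "htag i t \<notin> hmembers (hshift (HSet A))"
      unfolding hmembers_hshift by auto
    then show ?thesis using Suc by (auto simp del: hshift.simps)
  qed simp
qed

lemma hshift_neq_hset_htag: "hshift a \<noteq> hset {u, htag j t}"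
proof
  assume "hshift a = hset {u, htag j t}"
  then have "htag j t \<in> hshift ` hmembers a" by (simp add: hmembers_hshift[symmetric])
  then obtain b where "htag j t = hshift b" by blast
  then show False using hshift_neq_htag[of b j t] by simp
qed

lemma hshift_hset: "countable A \<Longrightarrow> hshift (hset A) = hset (hshift ` A)"
  by (simp add: hset_def cimage_def acset_inverse)

lemma mod_div_3_simps [simp]:
  fixes a :: nat
  shows "3 * a mod 3 = 0" "3 * a div 3 = a"
    and "Suc (3 * a) mod 3 = 1" "Suc (3 * a) div 3 = a"
    and "Suc (Suc (3 * a)) mod 3 = 2" "Suc (Suc (3 * a)) div 3 = a"
  by presburger+

lemma nat_mod3_cases:
  fixes k :: nat
  obtains t where "k = 3 * t" | a where "k = Suc (3 * a)" | a where "k = Suc (Suc (3 * a))"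
proof -
  have "k = 3 * (k div 3) \<or> k = Suc (3 * (k div 3)) \<or> k = Suc (Suc (3 * (k div 3)))"
    by presburger
  then show thesis using that by blast
qed

lemma range_mod3_split:
  "range f = range (\<lambda>t. f (3 * t)) \<union> range (\<lambda>a. f (Suc (3 * a))) \<union> range (\<lambda>a. f (Suc (Suc (3 * a))))"
proof -
  have "f k \<in> range (\<lambda>t. f (3 * t)) \<union> range (\<lambda>a. f (Suc (3 * a))) \<union> range (\<lambda>a. f (Suc (Suc (3 * a))))"
    for k by (cases k rule: nat_mod3_cases) auto
  then show ?thesis by blast
qed

text \<open>
  Row 3t of level j of enrich n x codes htag j t and row 3a+1 codes hshift (aset j x a); row
  3a+2 of level j+1 codes the pair {aset j (enrich n x) a, htag j 0}, row 0 = 3*0 being a tag,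
  while row 3a+2 of level 0 codes htag 0 a.
\<close>

definition enrich :: "enat \<Rightarrow> pt \<Rightarrow> pt" where
  "enrich n x j k =
    (if n \<le> enat j then (\<lambda>_. False) else
     case j of
       0 \<Rightarrow> (if k mod 3 = 1 then (\<lambda>m. case m of 0 \<Rightarrow> False | Suc m' \<Rightarrow> x 0 (k div 3) m')
            else tag_atom (k div 3))
     | Suc i \<Rightarrow>
         (if k mod 3 = 0 then (\<lambda>p. p = k)
          else if k mod 3 = 1 then (\<lambda>p. p mod 3 = 1 \<and> x (Suc i) (k div 3) (p div 3))
          else (\<lambda>p. p = k div 3 \<or> p = 0)))"

lemma enrich_0:
  "enat 0 < n \<Longrightarrow> enrich n x 0 k =
    (if k mod 3 = 1 then (\<lambda>m. case m of 0 \<Rightarrow> False | Suc m' \<Rightarrow> x 0 (k div 3) m')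
     else tag_atom (k div 3))"
  by (auto simp: enrich_def dest: leD)

lemma enrich_Suc:
  "enat (Suc i) < n \<Longrightarrow> enrich n x (Suc i) k =
    (if k mod 3 = 0 then (\<lambda>p. p = k)
     else if k mod 3 = 1 then (\<lambda>p. p mod 3 = 1 \<and> x (Suc i) (k div 3) (p div 3))
     else (\<lambda>p. p = k div 3 \<or> p = 0))"
  by (auto simp: enrich_def dest: leD)

lemma aset_enrich_tag: "enat j < n \<Longrightarrow> aset j (enrich n x) (3 * t) = htag j t"
proof (induction j)
  case 0
  then show ?case by (simp add: enrich_0)
next
  case (Suc j)
  then have "{p. enrich n x (Suc j) (3 * t) p} = {3 * t}" by (simp add: enrich_Suc)
  with Suc show ?case by (simp add: enat_Suc_less_imp_less)
qed

lemma aset_enrich_shift: "enat j < n \<Longrightarrow> aset j (enrich n x) (Suc (3 * a)) = hshift (aset j x a)"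
proof (induction j arbitrary: a)
  case 0
  then show ?case by (simp add: enrich_0)
next
  case (Suc j)
  have "{p. enrich n x (Suc j) (Suc (3 * a)) p} = (\<lambda>c. Suc (3 * c)) ` {c. x (Suc j) a c}"
  proof (intro equalityI subsetI)
    fix p assume "p \<in> {p. enrich n x (Suc j) (Suc (3 * a)) p}"
    then have "p mod 3 = 1" "x (Suc j) a (p div 3)" using Suc.prems by (simp_all add: enrich_Suc)
    moreover have "p = Suc (3 * (p div 3))" using \<open>p mod 3 = 1\<close> by presburger
    ultimately show "p \<in> (\<lambda>c. Suc (3 * c)) ` {c. x (Suc j) a c}" by blast
  qed (use Suc.prems in \<open>auto simp: enrich_Suc\<close>)
  with Suc show ?case
    by (simp add: enat_Suc_less_imp_less image_image hshift_hset)
qed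

lemma aset_enrich_0_tag: "enat 0 < n \<Longrightarrow> aset 0 (enrich n x) (Suc (Suc (3 * a))) = htag 0 a"
  by (simp add: enrich_0)

lemma aset_enrich_pair:
  assumes "enat (Suc j) < n"
  shows "aset (Suc j) (enrich n x) (Suc (Suc (3 * a))) = hset {aset j (enrich n x) a, htag j 0}"
proof -
  have "{p. enrich n x (Suc j) (Suc (Suc (3 * a))) p} = {a, 0}"
    using assms by (auto simp: enrich_Suc)
  moreover have "aset j (enrich n x) 0 = htag j 0"
    using aset_enrich_tag[OF enat_Suc_less_imp_less[OF assms], of x 0] by simp
  ultimately show ?thesis by simp
qed

lemma range_aset_enrich_0:
  assumes "enat 0 < n"
  shows "range (aset 0 (enrich n x)) = range (htag 0) \<union> hshift ` range (aset 0 x)"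
proof -
  have "range (aset 0 (enrich n x)) =
      range (\<lambda>t. htag 0 t) \<union> range (\<lambda>a. hshift (aset 0 x a)) \<union> range (\<lambda>a. htag 0 a)"
    by (subst range_mod3_split)
      (simp only: aset_enrich_tag[OF assms] aset_enrich_shift[OF assms] aset_enrich_0_tag[OF assms])
  then show ?thesis by (auto simp del: aset.simps htag.simps)
qed

lemma range_aset_enrich_Suc:
  assumes "enat (Suc j) < n"
  shows "range (aset (Suc j) (enrich n x)) =
    range (htag (Suc j)) \<union> hshift ` range (aset (Suc j) x)
      \<union> (\<lambda>u. hset {u, htag j 0}) ` range (aset j (enrich n x))"
proof -
  have "range (aset (Suc j) (enrich n x)) =
      range (\<lambda>t. htag (Suc j) t) \<union> range (\<lambda>a. hshift (aset (Suc j) x a))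
        \<union> range (\<lambda>a. hset {aset j (enrich n x) a, htag j 0})"
    by (subst range_mod3_split)
      (simp only: aset_enrich_tag[OF assms] aset_enrich_shift[OF assms] aset_enrich_pair[OF assms])
  then show ?thesis by (auto simp del: aset.simps htag.simps)
qed

lemma hshift_mem_range_aset_enrich:
  assumes "enat j < n"
  shows "hshift v \<in> range (aset j (enrich n x)) \<longleftrightarrow> v \<in> range (aset j x)"
proof -
  have "hshift v \<in> range (aset j (enrich n x)) \<longleftrightarrow> hshift v \<in> hshift ` range (aset j x)"
  proof (cases j)
    case 0
    then show ?thesis
      unfolding 0 range_aset_enrich_0[OF assms[unfolded 0]] using hshift_neq_htag by blast
  next
    case (Suc i)
    then show ?thesis
      unfolding Suc range_aset_enrich_Suc[OF assms[unfolded Suc]]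
      using hshift_neq_htag hshift_neq_hset_htag by blast
  qed
  then show ?thesis by (simp add: inj_image_mem_iff[OF inj_hshift])
qed

lemma range_aset_enrich_eq_iff:
  "(\<forall>j. enat j < n \<longrightarrow> range (aset j (enrich n x)) = range (aset j (enrich n y))) \<longleftrightarrow>
   (\<forall>j. enat j < n \<longrightarrow> range (aset j x) = range (aset j y))"
proof (intro iffI allI impI)
  fix j assume j: "enat j < n"
    and eq: "\<forall>j. enat j < n \<longrightarrow> range (aset j (enrich n x)) = range (aset j (enrich n y))"
  have "v \<in> range (aset j x) \<longleftrightarrow> v \<in> range (aset j y)" for v
    using hshift_mem_range_aset_enrich[OF j, of v x] hshift_mem_range_aset_enrich[OF j, of v y] eq j
    by simp
  then show "range (aset j x) = range (aset j y)" by blast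
next
  fix j assume "enat j < n" and eq: "\<forall>j. enat j < n \<longrightarrow> range (aset j x) = range (aset j y)"
  then show "range (aset j (enrich n x)) = range (aset j (enrich n y))"
  proof (induction j)
    case 0
    show ?case
      unfolding range_aset_enrich_0[OF "0.prems"(1)] eq[rule_format, OF "0.prems"(1)] by (rule refl)
  next
    case (Suc j)
    have j: "enat j < n" using enat_Suc_less_imp_less[OF Suc.prems(1)] .
    show ?case
      unfolding range_aset_enrich_Suc[OF Suc.prems(1)] eq[rule_format, OF Suc.prems(1)] Suc.IH[OF j eq]
      by (rule refl)
  qed
qed

lemma infinite_range_aset_enrich: "enat j < n \<Longrightarrow> infinite (range (aset j (enrich n x)))"
proof -
  assume "enat j < n"
  then have "range (htag j) \<subseteq> range (aset j (enrich n x))"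
    by (metis aset_enrich_tag image_subsetI rangeI)
  then show ?thesis using range_inj_infinite[OF inj_htag] infinite_super by blast
qed

section \<open>Removing repetitions\<close>

definition first_occ :: "nat \<Rightarrow> pt \<Rightarrow> nat set" where
  "first_occ j z = {k. \<forall>k'<k. aset j z k' \<noteq> aset j z k}"

definition enum_first :: "nat \<Rightarrow> pt \<Rightarrow> nat \<Rightarrow> nat" where
  "enum_first j z = enumerate (first_occ j z)"

text \<open>
  Row l of level j of dedup n z codes the l-th distinct set of level j of z, as the set of
  indices p of the distinct sets of level j-1 that are its members.
\<close>

definition dedup :: "enat \<Rightarrow> pt \<Rightarrow> pt" where
  "dedup n z j l =
    (if n \<le> enat j then (\<lambda>_. False) else
     case j of
       0 \<Rightarrow> z 0 (enum_first 0 z l)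
     | Suc i \<Rightarrow> (\<lambda>p. \<exists>k'. z (Suc i) (enum_first (Suc i) z l) k' \<and>
                         aset i z k' = aset i z (enum_first i z p)))"

lemma dedup_0: "enat 0 < n \<Longrightarrow> dedup n z 0 l = z 0 (enum_first 0 z l)"
  by (auto simp: dedup_def dest: leD)

lemma dedup_Suc_iff:
  "enat (Suc j) < n \<Longrightarrow>
    dedup n z (Suc j) l p \<longleftrightarrow> aset j z (enum_first j z p) \<in> hmembers (aset (Suc j) z (enum_first (Suc j) z l))"
  by (auto simp: dedup_def image_iff dest: leD)

lemma dedup_beyond: "n \<le> enat j \<Longrightarrow> dedup n z j = (\<lambda>_ _. False)"
  by (simp add: dedup_def fun_eq_iff)

lemma image_aset_first_occ: "aset j z ` first_occ j z = range (aset j z)"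
proof (intro equalityI subsetI)
  fix v assume "v \<in> range (aset j z)"
  then obtain k where k: "v = aset j z k" by auto
  define k0 where "k0 = (LEAST k0. aset j z k0 = aset j z k)"
  have k0: "aset j z k0 = aset j z k"
    unfolding k0_def by (rule LeastI) (rule refl)
  have "k0 \<in> first_occ j z"
    unfolding first_occ_def
  proof safe
    fix k' assume "k' < k0" "aset j z k' = aset j z k0"
    then have "aset j z k' = aset j z k" using k0 by simp
    then have "k0 \<le> k'" unfolding k0_def by (rule Least_le)
    then show False using \<open>k' < k0\<close> by simp
  qed
  then show "v \<in> aset j z ` first_occ j z" using k0 k by (metis imageI)
qed auto

lemma infinite_first_occ: "infinite (range (aset j z)) \<Longrightarrow> infinite (first_occ j z)"
  by (metis finite_imageI image_aset_first_occ)

lemma range_aset_enum_first: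
  "infinite (range (aset j z)) \<Longrightarrow> range (\<lambda>l. aset j z (enum_first j z l)) = range (aset j z)"
  unfolding enum_first_def
  by (metis bij_betw_def bij_enumerate finite_imageI image_aset_first_occ image_image)

lemma aset_enum_first_neq:
  assumes "infinite (range (aset j z))" "l \<noteq> l'"
  shows "aset j z (enum_first j z l) \<noteq> aset j z (enum_first j z l')"
proof -
  have inf: "infinite (first_occ j z)"
    using assms(1) by (rule infinite_first_occ)
  have *: "aset j z (enum_first j z a) \<noteq> aset j z (enum_first j z b)" if "a < b" for a b
  proof -
    have "enum_first j z a < enum_first j z b"
      using that inf unfolding enum_first_def by (simp add: enumerate_mono)
    moreover have "enum_first j z b \<in> first_occ j z"
      using inf unfolding enum_first_def by (simp add: enumerate_in_set)
    ultimately show ?thesis unfolding first_occ_def by auto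
  qed
  show ?thesis using assms(2) *[of l l'] *[of l' l] by (metis linorder_neqE_nat)
qed

lemma aset_eq_if_row_eq: "x j k = x j k' \<Longrightarrow> aset j x k = aset j x k'"
  by (cases j) auto

locale infinite_levels =
  fixes n :: enat and z :: pt
  assumes infinite_range_aset: "\<And>j. enat j < n \<Longrightarrow> infinite (range (aset j z))"
begin

lemma aset_dedup: "enat j < n \<Longrightarrow> aset j (dedup n z) l = aset j z (enum_first j z l)"
proof (induction j arbitrary: l)
  case 0
  then show ?case by (simp add: dedup_0)
next
  case (Suc j)
  have j: "enat j < n" using enat_Suc_less_imp_less[OF Suc.prems] .
  let ?members = "hmembers (aset (Suc j) z (enum_first (Suc j) z l))"
  have "aset j (dedup n z) ` {p. dedup n z (Suc j) l p} =
      (\<lambda>p. aset j z (enum_first j z p)) ` {p. aset j z (enum_first j z p) \<in> ?members}"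
    using Suc j by (simp add: dedup_Suc_iff)
  also have "\<dots> = ?members"
  proof (intro equalityI subsetI)
    fix w assume w: "w \<in> ?members"
    then have "w \<in> range (\<lambda>p. aset j z (enum_first j z p))"
      using range_aset_enum_first[OF infinite_range_aset[OF j]] by auto
    then obtain p where "w = aset j z (enum_first j z p)" by blast
    with w show "w \<in> (\<lambda>p. aset j z (enum_first j z p)) ` {p. aset j z (enum_first j z p) \<in> ?members}"
      by blast
  qed auto
  finally show ?case by simp
qed

lemma range_aset_dedup: "enat j < n \<Longrightarrow> range (aset j (dedup n z)) = range (aset j z)"
proof -
  assume j: "enat j < n"
  then have "aset j (dedup n z) = (\<lambda>l. aset j z (enum_first j z l))"
    by (simp add: aset_dedup fun_eq_iff)
  then show ?thesis using range_aset_enum_first[OF infinite_range_aset[OF j]] by simp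
qed

lemma dedup_row_inj: "enat j < n \<Longrightarrow> dedup n z j l = dedup n z j l' \<Longrightarrow> l = l'"
  using aset_eq_if_row_eq[of "dedup n z" j l l'] aset_dedup aset_enum_first_neq infinite_range_aset
  by metis

lemma injective_seq_dedup: "enat j < n \<Longrightarrow> injective_seq (dedup n z j)"
  unfolding injective_seq_def using dedup_row_inj by blast

lemma enum_first_hits: "enat j < n \<Longrightarrow> \<exists>l. aset j z (enum_first j z l) = aset j z c"
  using range_aset_enum_first[OF infinite_range_aset] by (metis rangeE rangeI)

end

locale rich_levels = infinite_levels +
  assumes covering: "\<And>j a. enat (Suc j) < n \<Longrightarrow> \<exists>c. aset j z a \<in> hmembers (aset (Suc j) z c)"
    and nonempty: "\<And>j c. enat (Suc j) < n \<Longrightarrow> hmembers (aset (Suc j) z c) \<noteq> {}"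
    and separating: "\<And>j a b. enat (Suc j) < n \<Longrightarrow> aset j z a \<noteq> aset j z b \<Longrightarrow>
        \<exists>c. (aset j z a \<in> hmembers (aset (Suc j) z c)) \<noteq> (aset j z b \<in> hmembers (aset (Suc j) z c))"
begin

lemma dedup_Suc_covers: "enat (Suc j) < n \<Longrightarrow> \<exists>l. dedup n z (Suc j) l p"
proof -
  assume j: "enat (Suc j) < n"
  obtain c where c: "aset j z (enum_first j z p) \<in> hmembers (aset (Suc j) z c)"
    using covering[OF j] by blast
  obtain l where "aset (Suc j) z (enum_first (Suc j) z l) = aset (Suc j) z c"
    using enum_first_hits[OF j] by blast
  then show ?thesis using c dedup_Suc_iff[OF j] by metis
qed

lemma dedup_Suc_nonempty: "enat (Suc j) < n \<Longrightarrow> \<exists>p. dedup n z (Suc j) l p"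
proof -
  assume j: "enat (Suc j) < n"
  obtain w where w: "w \<in> hmembers (aset (Suc j) z (enum_first (Suc j) z l))"
    using nonempty[OF j] by blast
  then obtain c where "w = aset j z c" by auto
  then obtain p where "aset j z (enum_first j z p) = w"
    using enum_first_hits[OF enat_Suc_less_imp_less[OF j]] by metis
  then show ?thesis using w dedup_Suc_iff[OF j] by metis
qed

lemma dedup_in_Xsp: "dedup n z \<in> Xsp n"
proof -
  have "(\<forall>m. \<exists>k. dedup n z i k m) \<and> (\<forall>k. \<exists>m. dedup n z i k m) \<and>
      (\<forall>k l1 l2. dedup n z (i - 1) l1 = dedup n z (i - 1) l2 \<longrightarrow> dedup n z i k l1 = dedup n z i k l2)"
    if "1 \<le> i" "enat i < n" for i
  proof -
    from that obtain j where j: "i = Suc j" by (cases i) auto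
    with that have "enat (Suc j) < n" by simp
    moreover from this have "enat j < n" by (rule enat_Suc_less_imp_less)
    ultimately show ?thesis
      using j dedup_Suc_covers dedup_Suc_nonempty by (auto dest: dedup_row_inj)
  qed
  then show ?thesis unfolding Xsp_def using dedup_beyond by blast
qed

lemma separated_seq_dedup: "0 < j \<Longrightarrow> enat j < n \<Longrightarrow> separated_seq (dedup n z j)"
  unfolding separated_seq_def
proof (intro allI impI)
  fix p q :: nat assume "0 < j" "enat j < n" "p \<noteq> q"
  then obtain i where i: "j = Suc i" by (cases j) auto
  with \<open>enat j < n\<close> have "enat (Suc i) < n" by simp
  have "aset i z (enum_first i z p) \<noteq> aset i z (enum_first i z q)"
    using aset_enum_first_neq infinite_range_aset \<open>enat (Suc i) < n\<close> \<open>p \<noteq> q\<close>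
    by (meson enat_Suc_less_imp_less)
  then obtain c where c: "(aset i z (enum_first i z p) \<in> hmembers (aset (Suc i) z c)) \<noteq>
      (aset i z (enum_first i z q) \<in> hmembers (aset (Suc i) z c))"
    using separating[OF \<open>enat (Suc i) < n\<close>] by blast
  obtain k where "aset (Suc i) z (enum_first (Suc i) z k) = aset (Suc i) z c"
    using enum_first_hits[OF \<open>enat (Suc i) < n\<close>] by blast
  then show "\<exists>k. dedup n z j k p \<noteq> dedup n z j k q"
    using c i dedup_Suc_iff[OF \<open>enat (Suc i) < n\<close>] by metis
qed

end

lemma rich_levels_enrich:
  assumes x: "x \<in> Xsp n"
  shows "rich_levels n (enrich n x)"
proof
  fix j assume "enat j < n"
  then show "infinite (range (aset j (enrich n x)))" by (rule infinite_range_aset_enrich)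
next
  fix j a assume j: "enat (Suc j) < n"
  show "\<exists>c. aset j (enrich n x) a \<in> hmembers (aset (Suc j) (enrich n x) c)"
    using aset_enrich_pair[OF j] by (intro exI[of _ "Suc (Suc (3 * a))"]) (simp del: aset.simps)
next
  fix j c assume j: "enat (Suc j) < n"
  show "hmembers (aset (Suc j) (enrich n x) c) \<noteq> {}"
  proof (cases c rule: nat_mod3_cases)
    case (1 t)
    then show ?thesis using aset_enrich_tag[OF j] by (simp del: aset.simps)
  next
    case (2 a)
    obtain m where "x (Suc j) a m" using Xsp_row_nonempty[OF x j] by blast
    then have "aset j x m \<in> hmembers (aset (Suc j) x a)" by simp
    then show ?thesis using 2 aset_enrich_shift[OF j] by (auto simp: hmembers_hshift simp del: aset.simps)
  next
    case (3 a)
    then show ?thesis using aset_enrich_pair[OF j] by (simp del: aset.simps)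
  qed
next
  fix j a b assume j: "enat (Suc j) < n" and ne: "aset j (enrich n x) a \<noteq> aset j (enrich n x) b"
  show "\<exists>c. (aset j (enrich n x) a \<in> hmembers (aset (Suc j) (enrich n x) c)) \<noteq>
      (aset j (enrich n x) b \<in> hmembers (aset (Suc j) (enrich n x) c))"
  proof (cases "aset j (enrich n x) b = htag j 0")
    case False
    then show ?thesis
      using ne aset_enrich_pair[OF j] by (intro exI[of _ "Suc (Suc (3 * a))"]) (simp del: aset.simps)
  next
    case True
    then show ?thesis
      using ne aset_enrich_tag[OF j, of x 0] by (intro exI[of _ 0]) (simp del: aset.simps)
  qed
qed

section \<open>Borel measurability\<close>

instance bool :: second_countable_topology
proof
  show "\<exists>B::bool set set. countable B \<and> open = generate_topology B"
    by (intro exI[of _ UNIV])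
      (auto simp: fun_eq_iff open_discrete intro: generate_topology.Basis countable_finite)
qed

lemma borel_measurable_bool_iff: "(P \<in> borel_measurable M) \<longleftrightarrow> Measurable.pred M P"
  for P :: "'a \<Rightarrow> bool"
  by (simp add: measurable_cong_sets[OF refl sets_borel_eq_count_space])

lemma borel_measurable_pt:
  fixes f :: "'a \<Rightarrow> pt"
  assumes "\<And>j k p. Measurable.pred M (\<lambda>x. f x j k p)"
  shows "f \<in> borel_measurable M"
proof (rule measurable_coordinatewise_then_product)
  fix j show "(\<lambda>x. f x j) \<in> borel_measurable M"
  proof (rule measurable_coordinatewise_then_product)
    fix k show "(\<lambda>x. f x j k) \<in> borel_measurable M"
    proof (rule measurable_coordinatewise_then_product)
      fix p show "(\<lambda>x. f x j k p) \<in> borel_measurable M"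
        using assms by (simp add: borel_measurable_bool_iff)
    qed
  qed
qed

lemma pred_pt_coordinate: "Measurable.pred borel (\<lambda>x::pt. x j k p)"
proof -
  have "(\<lambda>x::pt. x j k p) \<in> borel_measurable borel"
    by (rule measurable_product_then_coordinatewise[OF measurable_product_then_coordinatewise[OF
          measurable_product_then_coordinatewise[OF measurable_ident_sets[OF refl]]]])
  then show ?thesis by (simp add: borel_measurable_bool_iff)
qed

lemma pred_seteq_a:
  fixes f :: "pt \<Rightarrow> pt"
  assumes [measurable]: "\<And>j k p. Measurable.pred borel (\<lambda>x. f x j k p)"
  shows "Measurable.pred borel (\<lambda>x. seteq_a j (f x) a (f x) b)"
proof (induction j arbitrary: a b)
  case 0
  have "(\<lambda>x. seteq_a 0 (f x) a (f x) b) = (\<lambda>x. \<forall>m. f x 0 a m = f x 0 b m)"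
    by (auto simp: fun_eq_iff)
  then show ?case by simp measurable
next
  case (Suc j)
  note [measurable] = Suc
  show ?case unfolding seteq_a.simps by measurable
qed

lemma pred_aset_eq:
  fixes f :: "pt \<Rightarrow> pt"
  assumes "\<And>j k p. Measurable.pred borel (\<lambda>x. f x j k p)"
  shows "Measurable.pred borel (\<lambda>x. aset j (f x) a = aset j (f x) b)"
  using pred_seteq_a[OF assms] by (simp add: seteq_a_iff_aset_eq)

lemma enumerate_eq_iff:
  fixes S :: "nat set"
  assumes S: "infinite S"
  shows "enumerate S l = k \<longleftrightarrow> k \<in> S \<and> card {k'\<in>S. k' < k} = l"
proof -
  have card: "card {k'\<in>S. k' < enumerate S i} = i" for i
  proof -
    have "{k'\<in>S. k' < enumerate S i} = enumerate S ` {..<i}"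
    proof (intro equalityI subsetI)
      fix k' assume "k' \<in> {k'\<in>S. k' < enumerate S i}"
      then obtain t where "enumerate S t = k'" "enumerate S t < enumerate S i"
        using enumerate_Ex[OF S] by auto
      then show "k' \<in> enumerate S ` {..<i}" using S by auto
    qed (auto simp: S enumerate_in_set)
    then show ?thesis using inj_enumerate[OF S] by (simp add: card_image inj_on_subset)
  qed
  show ?thesis
  proof
    assume "enumerate S l = k"
    then show "k \<in> S \<and> card {k'\<in>S. k' < k} = l" using card enumerate_in_set[OF S] by auto
  next
    assume k: "k \<in> S \<and> card {k'\<in>S. k' < k} = l"
    then obtain t where "enumerate S t = k" using enumerate_Ex[OF S] by auto
    then show "enumerate S l = k" using card[of t] k by auto
  qed
qed

lemma card_less_eq_iff:
  "card {k'\<in>S. k' < k} = l \<longleftrightarrow> (\<exists>A\<in>Pow {..<k}. card A = l \<and> (\<forall>k'<k. k' \<in> S \<longleftrightarrow> k' \<in> A))"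
proof
  assume "card {k'\<in>S. k' < k} = l"
  then show "\<exists>A\<in>Pow {..<k}. card A = l \<and> (\<forall>k'<k. k' \<in> S \<longleftrightarrow> k' \<in> A)"
    by (intro bexI[of _ "{k'\<in>S. k' < k}"]) auto
next
  assume "\<exists>A\<in>Pow {..<k}. card A = l \<and> (\<forall>k'<k. k' \<in> S \<longleftrightarrow> k' \<in> A)"
  then obtain A where "A \<subseteq> {..<k}" "card A = l" "\<forall>k'<k. k' \<in> S \<longleftrightarrow> k' \<in> A" by auto
  moreover from this have "{k'\<in>S. k' < k} = A" by auto
  ultimately show "card {k'\<in>S. k' < k} = l" by simp
qed

lemma pred_enum_first_eq:
  fixes f :: "pt \<Rightarrow> pt"
  assumes [measurable]: "\<And>j k p. Measurable.pred borel (\<lambda>x. f x j k p)"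
    and infinite: "\<And>x. infinite (range (aset j (f x)))"
  shows "Measurable.pred borel (\<lambda>x. enum_first j (f x) l = k)"
proof -
  note [measurable] = pred_aset_eq[OF assms(1)]
  have first_occ_infinite: "infinite (first_occ j (f x))" for x
    using infinite by (rule infinite_first_occ)
  show ?thesis
    unfolding enum_first_def enumerate_eq_iff[OF first_occ_infinite] card_less_eq_iff
    unfolding first_occ_def mem_Collect_eq by measurable
qed

lemma pred_enrich: "Measurable.pred borel (\<lambda>x. enrich n x j k p)"
proof (cases "n \<le> enat j")
  case True
  then show ?thesis by (simp add: enrich_def)
next
  case False
  then have j: "enat j < n" by simp
  note [measurable] = pred_pt_coordinate
  show ?thesis
  proof (cases j)
    case 0
    have eq: "(\<lambda>x. enrich n x j k p) =
        (\<lambda>x. if k mod 3 = 1 \<and> p \<noteq> 0 then x 0 (k div 3) (p - 1)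
             else k mod 3 \<noteq> 1 \<and> tag_atom (k div 3) p)"
      using j 0 by (auto simp: enrich_0 fun_eq_iff split: nat.split)
    show ?thesis unfolding eq by measurable
  next
    case (Suc i)
    have eq: "(\<lambda>x. enrich n x j k p) =
        (\<lambda>x. if k mod 3 = 0 then p = k
             else if k mod 3 = 1 then p mod 3 = 1 \<and> x (Suc i) (k div 3) (p div 3)
             else p = k div 3 \<or> p = 0)"
      using j Suc by (simp add: enrich_Suc)
    show ?thesis unfolding eq by measurable
  qed
qed

lemma pred_dedup:
  fixes f :: "pt \<Rightarrow> pt"
  assumes [measurable]: "\<And>j k p. Measurable.pred borel (\<lambda>x. f x j k p)"
    and infinite: "\<And>x i. enat i < n \<Longrightarrow> infinite (range (aset i (f x)))"
  shows "Measurable.pred borel (\<lambda>x. dedup n (f x) j l p)"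
proof (cases "n \<le> enat j")
  case True
  then show ?thesis by (simp add: dedup_beyond)
next
  case False
  then have j: "enat j < n" by simp
  show ?thesis
  proof (cases j)
    case 0
    note [measurable] = pred_enum_first_eq[OF assms(1) infinite[OF j[unfolded 0]]]
    have eq: "(\<lambda>x. dedup n (f x) j l p) = (\<lambda>x. \<exists>k. enum_first 0 (f x) l = k \<and> f x 0 k p)"
      using j 0 by (simp add: dedup_0)
    show ?thesis unfolding eq by measurable
  next
    case (Suc i)
    have i: "enat i < n" using j Suc enat_Suc_less_imp_less by simp
    note [measurable] = pred_aset_eq[OF assms(1)]
      pred_enum_first_eq[OF assms(1) infinite[OF j[unfolded Suc]]]
      pred_enum_first_eq[OF assms(1) infinite[OF i]]
    have eq: "(\<lambda>x. dedup n (f x) j l p) = (\<lambda>x. \<exists>a b k'. enum_first (Suc i) (f x) l = a \<and>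
        enum_first i (f x) p = b \<and> f x (Suc i) a k' \<and> aset i (f x) k' = aset i (f x) b)"
      using j Suc by (auto simp: dedup_def fun_eq_iff dest: leD)
    show ?thesis unfolding eq by measurable
  qed
qed

lemma borel_measurable_dedup_enrich: "(\<lambda>x. dedup n (enrich n x)) \<in> borel_measurable borel"
  by (intro borel_measurable_pt pred_dedup pred_enrich infinite_range_aset_enrich)

lemma Frel_dedup_enrich_iff:
  assumes "1 \<le> n" "x \<in> Xsp n" "y \<in> Xsp n"
  shows "Frel n (dedup n (enrich n x)) (dedup n (enrich n y)) \<longleftrightarrow> Frel n x y"
proof -
  interpret x: rich_levels n "enrich n x" using rich_levels_enrich[OF assms(2)] .
  interpret y: rich_levels n "enrich n y" using rich_levels_enrich[OF assms(3)] .
  show ?thesis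
    using assms x.dedup_in_Xsp y.dedup_in_Xsp
    by (simp add: Frel_iff_levels x.range_aset_dedup y.range_aset_dedup range_aset_enrich_eq_iff)
qed

theorem lemma5p2:
  fixes n :: enat
  assumes "1 \<le> n"
  shows "\<exists>\<psi>. borel_reduction (Xsp n) (Frel n) (Frel n) \<psi> \<and>
    (\<forall>x \<in> \<psi> ` Xsp n.
       (\<forall>i. enat i < n \<longrightarrow> injective_seq (x i)) \<and>
       (\<forall>i. 0 < i \<and> enat i < n \<longrightarrow> separated_seq (x i)))"
proof (intro exI conjI ballI)
  let ?\<psi> = "\<lambda>x. dedup n (enrich n x)"
  have into: "?\<psi> x \<in> Xsp n" if "x \<in> Xsp n" for x
    using rich_levels.dedup_in_Xsp[OF rich_levels_enrich[OF that]] .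
  show "borel_reduction (Xsp n) (Frel n) (Frel n) ?\<psi>"
    unfolding borel_reduction_def
  proof (intro conjI ballI)
    show "?\<psi> \<in> restrict_space borel (Xsp n) \<rightarrow>\<^sub>M restrict_space borel (Xsp n)"
      using into borel_measurable_dedup_enrich
      by (intro measurable_restrict_space2 measurable_restrict_space1) (auto simp: space_restrict_space)
  qed (use Frel_dedup_enrich_iff[OF assms] in blast)
  fix x' assume "x' \<in> ?\<psi> ` Xsp n"
  then obtain x where x: "x \<in> Xsp n" and x': "x' = ?\<psi> x" by blast
  interpret rich_levels n "enrich n x" using rich_levels_enrich[OF x] .
  show "\<forall>i. enat i < n \<longrightarrow> injective_seq (x' i)" using x' injective_seq_dedup by blast
  show "\<forall>i. 0 < i \<and> enat i < n \<longrightarrow> separated_seq (x' i)" using x' separated_seq_dedup by blast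
qed

end
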